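(* The function $$f(x,y)=\frac{(x+1)\log(x+y)}{(x+y)\big(\log(x+y)-\log y\big)},\qquad x>0,\ y\in\mathbb N_+,$$ is monotonically increasing in $y$ for every fixed $x>0$, and monotonically decreasing in $x$ for every fixed positive integer $y$.
   Context: $\log$ denotes the natural logarithm and $\mathbb N_+=\{1,2,3,\dots\}$. *)

theory Defs
  imports Complex_Main
begin

definition f5 :: "real \<Rightarrow> real \<Rightarrow> real" where
  "f5 x y = (x + 1) * ln (x + y) / ((x + y) * (ln (x + y) - ln y))"

end

theory Submission
  imports Defs "HOL-Analysis.Complex_Transcendental"
begin

text \<open>Both claims are read off the signs of the partial derivatives of \<open>f5\<close>. Write
  \<open>L = ln (x + y)\<close> and \<open>d = ln (x + y) - ln y > 0\<close>. The \<open>y\<close>-derivative has the sign of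
  \<open>d + L (x / y - d)\<close>, which is nonnegative because \<open>d = ln (1 + x / y) \<le> x / y\<close>.
  The \<open>x\<close>-derivative has the sign of \<open>(y - 1) L d - (x + 1) ln y\<close>; substituting
  \<open>x = y (exp d - 1)\<close> turns its nonpositivity into
  \<open>(y - 1) d\<^sup>2 \<le> ln y (y (exp d - 1 - d) + d + 1)\<close>, which follows from
  \<open>ln y \<ge> 2 (y - 1) / (y + 1)\<close> together with \<open>exp d \<ge> 1 + d + d\<^sup>2 / 2\<close> and \<open>exp d \<ge> d\<^sup>2\<close>.\<close>

lemma ln_ge_two_mult_diff_div_add:
  fixes y :: real
  assumes "1 \<le> y"
  shows "2 * ((y - 1) / (y + 1)) \<le> ln y"
proof -
  define t where "t = (y - 1) / (y + 1)"
  have "0 \<le> t" using assms by (simp add: t_def)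
  have series: "(\<lambda>n. 2 * t ^ (2 * n + 1) / of_nat (2 * n + 1)) sums ln y"
    unfolding t_def using assms by (intro ln_series_quadratic) simp
  have "(\<Sum>n\<in>{0}. 2 * t ^ (2 * n + 1) / of_nat (2 * n + 1))
          \<le> (\<Sum>n. 2 * t ^ (2 * n + 1) / of_nat (2 * n + 1))"
    using sums_summable[OF series] \<open>0 \<le> t\<close> by (intro sum_le_suminf) simp_all
  then show ?thesis
    using sums_unique[OF series] by (simp add: t_def)
qed

lemma exp_ge_square:
  fixes x :: real
  assumes "0 \<le> x"
  shows "x\<^sup>2 \<le> exp x"
proof -
  have "x \<le> 1 + x / 2 + (x / 2)\<^sup>2 / 2"
    using zero_le_power2[of "x - 2"] by (simp add: power2_eq_square algebra_simps)
  also have "\<dots> \<le> exp (x / 2)"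
    using assms by (intro exp_lower_Taylor_quadratic) simp
  finally have "x\<^sup>2 \<le> (exp (x / 2))\<^sup>2"
    using assms by (intro power_mono) simp_all
  also have "\<dots> = exp x"
    by (simp add: power2_eq_square flip: exp_add)
  finally show ?thesis .
qed

lemma diff_one_mult_square_le_ln_mult_exp_remainder:
  fixes y d :: real
  assumes "1 \<le> y" "0 \<le> d"
  shows "(y - 1) * d\<^sup>2 \<le> ln y * (y * (exp d - 1 - d) + d + 1)"
proof -
  define a where "a = (y - 1) / (y + 1)"
  define B where "B = y * (exp d - 1 - d) + d + 1"
  have taylor: "0 \<le> exp d - 1 - d - d\<^sup>2 / 2"
    using exp_lower_Taylor_quadratic[OF \<open>0 \<le> d\<close>] by simp
  have "0 \<le> y * (exp d - 1 - d)"
    using exp_ge_add_one_self[of d] assms by (intro mult_nonneg_nonneg) linarith+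
  then have "0 \<le> B"
    using assms by (simp add: B_def)
  have "exp d - 1 - d - d\<^sup>2 / 2 \<le> y * (exp d - 1 - d - d\<^sup>2 / 2)"
    using mult_right_mono[OF \<open>1 \<le> y\<close> taylor] by simp
  moreover have "2 * B - (y + 1) * d\<^sup>2 = 2 * (y * (exp d - 1 - d - d\<^sup>2 / 2)) + 2 * d + 2 - d\<^sup>2"
    by (simp add: B_def algebra_simps)
  ultimately have "(y + 1) * d\<^sup>2 \<le> 2 * B"
    using exp_ge_square[OF \<open>0 \<le> d\<close>] by linarith
  have "y - 1 = a * (y + 1)"
    using assms by (simp add: a_def)
  then have "(y - 1) * d\<^sup>2 = a * ((y + 1) * d\<^sup>2)"
    by simp
  also have "\<dots> \<le> a * (2 * B)"
    using \<open>(y + 1) * d\<^sup>2 \<le> 2 * B\<close> assms by (intro mult_left_mono) (simp_all add: a_def)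
  also have "\<dots> = 2 * a * B"
    by simp
  also have "\<dots> \<le> ln y * B"
    using ln_ge_two_mult_diff_div_add[OF \<open>1 \<le> y\<close>] \<open>0 \<le> B\<close>
    by (intro mult_right_mono) (simp_all add: a_def)
  finally show ?thesis by (simp add: B_def)
qed

lemma f5_has_derivative_y:
  assumes "0 < x" "0 < y"
  shows "(f5 x has_real_derivative
           (x + 1) * (ln (x + y) - ln y + ln (x + y) * (x / y - (ln (x + y) - ln y)))
             / ((x + y) * (ln (x + y) - ln y))\<^sup>2) (at y)"
proof -
  have "(1 / (x + y) - 1 / y) * (x + y) = - (x / y)"
    using assms by (simp add: left_diff_distrib add_divide_distrib)
  then have "((\<lambda>y. (x + y) * (ln (x + y) - ln y)) has_real_derivative
               ln (x + y) - ln y - x / y) (at y)"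
    using assms by (auto intro!: derivative_eq_intros)
  moreover have "((\<lambda>y. (x + 1) * ln (x + y)) has_real_derivative (x + 1) / (x + y)) (at y)"
    using assms by (auto intro!: derivative_eq_intros)
  moreover have "0 < (x + y) * (ln (x + y) - ln y)"
    using assms by simp
  ultimately have "(f5 x has_real_derivative
      ((x + 1) / (x + y) * ((x + y) * (ln (x + y) - ln y))
        - (x + 1) * ln (x + y) * (ln (x + y) - ln y - x / y))
      / ((x + y) * (ln (x + y) - ln y) * ((x + y) * (ln (x + y) - ln y)))) (at y)"
    unfolding f5_def[abs_def] by (intro DERIV_divide) auto
  moreover have "(x + 1) / (x + y) * ((x + y) * (ln (x + y) - ln y))
        = (x + 1) * (ln (x + y) - ln y)"
    using assms by simp
  moreover have "(x + 1) * (ln (x + y) - ln y)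
        - (x + 1) * ln (x + y) * (ln (x + y) - ln y - x / y)
      = (x + 1) * (ln (x + y) - ln y + ln (x + y) * (x / y - (ln (x + y) - ln y)))"
    by (simp add: algebra_simps add_divide_distrib)
  ultimately show ?thesis by (simp add: power2_eq_square)
qed

lemma f5_has_derivative_x:
  assumes "0 < x" "0 < y"
  shows "((\<lambda>x. f5 x y) has_real_derivative
           ((y - 1) * ln (x + y) * (ln (x + y) - ln y) - (x + 1) * ln y)
             / ((x + y) * (ln (x + y) - ln y))\<^sup>2) (at x)"
proof -
  have "((\<lambda>x. (x + 1) * ln (x + y)) has_real_derivative ln (x + y) + (x + 1) / (x + y)) (at x)"
    using assms by (auto intro!: derivative_eq_intros)
  moreover have "((\<lambda>x. (x + y) * (ln (x + y) - ln y)) has_real_derivative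
                   ln (x + y) - ln y + 1) (at x)"
    using assms by (auto intro!: derivative_eq_intros)
  moreover have "0 < (x + y) * (ln (x + y) - ln y)"
    using assms by simp
  ultimately have "((\<lambda>x. f5 x y) has_real_derivative
      ((ln (x + y) + (x + 1) / (x + y)) * ((x + y) * (ln (x + y) - ln y))
        - (x + 1) * ln (x + y) * (ln (x + y) - ln y + 1))
      / ((x + y) * (ln (x + y) - ln y) * ((x + y) * (ln (x + y) - ln y)))) (at x)"
    unfolding f5_def by (intro DERIV_divide) auto
  moreover have "(ln (x + y) + (x + 1) / (x + y)) * ((x + y) * (ln (x + y) - ln y))
        - (x + 1) * ln (x + y) * (ln (x + y) - ln y + 1)
      = (y - 1) * ln (x + y) * (ln (x + y) - ln y) - (x + 1) * ln y"
    using assms by (simp add: field_simps)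
  ultimately show ?thesis by (simp add: power2_eq_square)
qed

lemma f5_deriv_x_numerator_nonpos:
  fixes x y :: real
  assumes "1 \<le> y" "0 \<le> x"
  shows "(y - 1) * ln (x + y) * (ln (x + y) - ln y) - (x + 1) * ln y \<le> 0"
proof -
  define d where "d = ln (x + y) - ln y"
  have "0 < y" "y \<le> x + y"
    using assms by simp_all
  then have "ln y \<le> ln (x + y)"
    by simp
  then have "0 \<le> d"
    by (simp add: d_def)
  have "exp d = (x + y) / y"
    using assms by (simp add: d_def exp_diff)
  then have x_plus_one: "x + 1 = y * (exp d - 1) + 1"
    using assms by (simp add: field_simps)
  have ln_x_plus_y: "ln (x + y) = ln y + d"
    by (simp add: d_def)
  have "(y - 1) * (ln y + d) * d - (y * (exp d - 1) + 1) * ln y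
      = (y - 1) * d\<^sup>2 - ln y * (y * (exp d - 1 - d) + d + 1)"
    by (simp add: power2_eq_square algebra_simps)
  then show ?thesis
    using diff_one_mult_square_le_ln_mult_exp_remainder[OF \<open>1 \<le> y\<close> \<open>0 \<le> d\<close>]
    unfolding d_def[symmetric] x_plus_one ln_x_plus_y by simp
qed

lemma f5_mono_y:
  assumes "0 < x" "1 \<le> y1" "y1 \<le> y2"
  shows "f5 x y1 \<le> f5 x y2"
proof (rule DERIV_nonneg_imp_nondecreasing[OF \<open>y1 \<le> y2\<close>])
  fix y
  assume "y1 \<le> y" "y \<le> y2"
  then have "1 \<le> y" using assms by simp
  have "ln (x + y) - ln y = ln ((x + y) / y)"
    using assms \<open>1 \<le> y\<close> by (simp add: ln_div)
  also have "\<dots> = ln (1 + x / y)"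
    using assms \<open>1 \<le> y\<close> by (simp add: field_simps)
  also have "\<dots> \<le> x / y"
    using assms \<open>1 \<le> y\<close> by (intro ln_add_one_self_le_self) simp
  finally have "0 \<le> ln (x + y) - ln y + ln (x + y) * (x / y - (ln (x + y) - ln y))"
    using assms \<open>1 \<le> y\<close> by simp
  then have "0 \<le> (x + 1) * (ln (x + y) - ln y + ln (x + y) * (x / y - (ln (x + y) - ln y)))
                / ((x + y) * (ln (x + y) - ln y))\<^sup>2"
    using assms by simp
  moreover have "(f5 x has_real_derivative
           (x + 1) * (ln (x + y) - ln y + ln (x + y) * (x / y - (ln (x + y) - ln y)))
             / ((x + y) * (ln (x + y) - ln y))\<^sup>2) (at y)"
    using assms \<open>1 \<le> y\<close> by (intro f5_has_derivative_y) simp_all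
  ultimately show "\<exists>D. (f5 x has_real_derivative D) (at y) \<and> 0 \<le> D"
    by blast
qed

lemma f5_antimono_x:
  assumes "1 \<le> y" "0 < x1" "x1 \<le> x2"
  shows "f5 x2 y \<le> f5 x1 y"
proof (rule DERIV_nonpos_imp_nonincreasing[OF \<open>x1 \<le> x2\<close>])
  fix x
  assume "x1 \<le> x" "x \<le> x2"
  then have "0 < x" using assms by simp
  have "((y - 1) * ln (x + y) * (ln (x + y) - ln y) - (x + 1) * ln y)
          / ((x + y) * (ln (x + y) - ln y))\<^sup>2 \<le> 0"
    using f5_deriv_x_numerator_nonpos[OF \<open>1 \<le> y\<close>] \<open>0 < x\<close>
    by (intro divide_nonpos_nonneg) simp_all
  moreover have "((\<lambda>x. f5 x y) has_real_derivative
           ((y - 1) * ln (x + y) * (ln (x + y) - ln y) - (x + 1) * ln y)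
             / ((x + y) * (ln (x + y) - ln y))\<^sup>2) (at x)"
    using \<open>0 < x\<close> \<open>1 \<le> y\<close> by (intro f5_has_derivative_x) simp_all
  ultimately show "\<exists>D. ((\<lambda>x. f5 x y) has_real_derivative D) (at x) \<and> D \<le> 0"
    by blast
qed

theorem lemma5:
  shows "(\<forall>x::real. x > 0 \<longrightarrow>
            (\<forall>y1 y2 :: nat. 1 \<le> y1 \<longrightarrow> y1 \<le> y2 \<longrightarrow> f5 x (real y1) \<le> f5 x (real y2)))
       \<and> (\<forall>y::nat. 1 \<le> y \<longrightarrow>
            (\<forall>x1 x2 :: real. 0 < x1 \<longrightarrow> x1 \<le> x2 \<longrightarrow> f5 x2 (real y) \<le> f5 x1 (real y)))"
  using f5_mono_y f5_antimono_x by simp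

end
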